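(* Let $S$ be an $L$-theory extending $I\Sigma_1$ such that for some $K\in\mathbb{N}$, $S$ proves: for all $a,b,c$, if $a,b,c$ are pairwise coprime and $a+b=c$, then $c < K\,\mathrm{rad}(abc)^{1+1/3}$; and $S$ proves Catalan's conjecture for the definable exponential $x^y$, i.e., the only $x,y,a,b>1$ with $x^a - y^b = 1$ are $x=3$, $a=2$, $y=2$, $b=3$. Then the theory $S + \mathrm{Exp}'$ proves Catalan's conjecture for $e$: whenever $x,y \in B$ and $a,b \in A$ with $x,y,a,b>1$ and $e(x,a) - e(y,b) = 1$, then $x=3$, $a=2$, $y=2$, $b=3$.
   Context: $L = \langle 0,1,+,\cdot,\le\rangle$ and $L^e = \langle 0,1,+,\cdot,e,\le\rangle$ with $e$ a binary (possibly partial) function symbol. $I\Sigma_1$ is Robinson arithmetic plus induction for $\Sigma_1$-formulas; in it the usual exponential $x^y$ is $\Delta_1$-definable and every element has a unique prime factorization. $\mathrm{rad}(a)$ is the product of all primes dividing $a$, each taken once. Presburger arithmetic $\mathrm{Pr}$: $0 \ne z+1$; $x\neq 0 \to \exists z\,(x = z+1)$; $x+z=y+z\to x=y$; $x+0=x$; associativity and commutativity of $+$; $x\le y \leftrightarrow \exists z\,(x+z=y)$; and for each standard $0<n\in\mathbb{N}$, $\exists y\,(ny \le x < n(y+1))$. $\mathrm{Exp}'$ consists of the axioms for an $L^e$-structure $\langle \mathcal{B},e\rangle$: (e0) there is an $L$-substructure $\mathcal{A}$ of $\mathcal{B}$ (universe $A$) satisfying the axioms of $\mathrm{Pr}$ such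 that $e: B\times A\to B$; and for all $x\in B$, $y,z\in A$: (e1) $(x=1\vee y=0)\leftrightarrow e(x,y)=1$; (e2) $x\neq0\to e(x,y)\ne 0$; (e3) $e(x,1)=x$; (e4) $e(x,y+z)=e(x,y)\cdot e(x,z)$. *)

theory Defs
  imports Main
begin

record 'a Lstr =
  zer :: 'a
  one :: 'a
  add :: "'a \<Rightarrow> 'a \<Rightarrow> 'a"
  mul :: "'a \<Rightarrow> 'a \<Rightarrow> 'a"
  leq :: "'a \<Rightarrow> 'a \<Rightarrow> bool"

datatype trm = Var nat | Zr | On | Pls trm trm | Tms trm trm

datatype fm =
    Eq trm trm | Le trm trm | Neg fm | Conj fm fm | Disj fm fm | Impl fm fm
  | BEx nat trm fm
  | BAll nat trm fm
  | Ex nat fm | All nat fm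

fun evt :: "'a Lstr \<Rightarrow> (nat \<Rightarrow> 'a) \<Rightarrow> trm \<Rightarrow> 'a" where
  "evt M v (Var i) = v i"
| "evt M v Zr = zer M"
| "evt M v On = one M"
| "evt M v (Pls s t) = add M (evt M v s) (evt M v t)"
| "evt M v (Tms s t) = mul M (evt M v s) (evt M v t)"

fun sat :: "'a Lstr \<Rightarrow> (nat \<Rightarrow> 'a) \<Rightarrow> fm \<Rightarrow> bool" where
  "sat M v (Eq s t) = (evt M v s = evt M v t)"
| "sat M v (Le s t) = leq M (evt M v s) (evt M v t)"
| "sat M v (Neg p) = (\<not> sat M v p)"
| "sat M v (Conj p q) = (sat M v p \<and> sat M v q)"
| "sat M v (Disj p q) = (sat M v p \<or> sat M v q)"
| "sat M v (Impl p q) = (sat M v p \<longrightarrow> sat M v q)"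
| "sat M v (BEx x t p) = (\<exists>a. leq M a (evt M v t) \<and> sat M (v(x := a)) p)"
| "sat M v (BAll x t p) = (\<forall>a. leq M a (evt M v t) \<longrightarrow> sat M (v(x := a)) p)"
| "sat M v (Ex x p) = (\<exists>a. sat M (v(x := a)) p)"
| "sat M v (All x p) = (\<forall>a. sat M (v(x := a)) p)"

fun delta0 :: "fm \<Rightarrow> bool" where
  "delta0 (Eq s t) = True"
| "delta0 (Le s t) = True"
| "delta0 (Neg p) = delta0 p"
| "delta0 (Conj p q) = (delta0 p \<and> delta0 q)"
| "delta0 (Disj p q) = (delta0 p \<and> delta0 q)"
| "delta0 (Impl p q) = (delta0 p \<and> delta0 q)"
| "delta0 (BEx x t p) = delta0 p"
| "delta0 (BAll x t p) = delta0 p"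
| "delta0 (Ex x p) = False"
| "delta0 (All x p) = False"

fun sigma1 :: "fm \<Rightarrow> bool" where
  "sigma1 (Ex x p) = (sigma1 p \<or> delta0 p)"
| "sigma1 p = delta0 p"

definition RobQ :: "'a Lstr \<Rightarrow> bool" where
  "RobQ M \<longleftrightarrow>
     (\<forall>x. add M x (one M) \<noteq> zer M) \<and>
     (\<forall>x y. add M x (one M) = add M y (one M) \<longrightarrow> x = y) \<and>
     (\<forall>x. x \<noteq> zer M \<longrightarrow> (\<exists>y. x = add M y (one M))) \<and>
     (\<forall>x. add M x (zer M) = x) \<and>
     (\<forall>x y. add M x (add M y (one M)) = add M (add M x y) (one M)) \<and>
     (\<forall>x. mul M x (zer M) = zer M) \<and>
     (\<forall>x y. mul M x (add M y (one M)) = add M (mul M x y) x) \<and>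
     (\<forall>x y. leq M x y \<longleftrightarrow> (\<exists>z. add M x z = y))"

definition ISigma1 :: "'a Lstr \<Rightarrow> bool" where
  "ISigma1 M \<longleftrightarrow> RobQ M \<and>
     (\<forall>p x v. sigma1 p \<longrightarrow>
        sat M (v(x := zer M)) p \<longrightarrow>
        (\<forall>a. sat M (v(x := a)) p \<longrightarrow> sat M (v(x := add M a (one M))) p) \<longrightarrow>
        (\<forall>a. sat M (v(x := a)) p))"

fun nm :: "'a Lstr \<Rightarrow> nat \<Rightarrow> 'a" where
  "nm M 0 = zer M"
| "nm M (Suc n) = add M (nm M n) (one M)"

text \<open>n-fold sum y + ... + y (the abbreviation n y of Presburger arithmetic).\<close>
fun madd :: "'a Lstr \<Rightarrow> nat \<Rightarrow> 'a \<Rightarrow> 'a" where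
  "madd M 0 y = zer M"
| "madd M (Suc n) y = add M (madd M n y) y"

definition lt :: "'a Lstr \<Rightarrow> 'a \<Rightarrow> 'a \<Rightarrow> bool" where
  "lt M x y \<longleftrightarrow> leq M x y \<and> x \<noteq> y"

definition mdvd :: "'a Lstr \<Rightarrow> 'a \<Rightarrow> 'a \<Rightarrow> bool" where
  "mdvd M d a \<longleftrightarrow> (\<exists>k. mul M d k = a)"

definition mcoprime :: "'a Lstr \<Rightarrow> 'a \<Rightarrow> 'a \<Rightarrow> bool" where
  "mcoprime M a b \<longleftrightarrow> (\<forall>d. mdvd M d a \<and> mdvd M d b \<longrightarrow> d = one M)"

definition mprime :: "'a Lstr \<Rightarrow> 'a \<Rightarrow> bool" where
  "mprime M p \<longleftrightarrow> lt M (one M) p \<and> (\<forall>d. mdvd M d p \<longrightarrow> d = one M \<or> d = p)"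

definition msquarefree :: "'a Lstr \<Rightarrow> 'a \<Rightarrow> bool" where
  "msquarefree M r \<longleftrightarrow> (\<forall>d. mdvd M (mul M d d) r \<longrightarrow> d = one M)"

text \<open>r = rad(a): the squarefree divisor of a divisible by every prime dividing a
  (in models of I Sigma_1 this is the product of the distinct primes dividing a).\<close>
definition is_rad :: "'a Lstr \<Rightarrow> 'a \<Rightarrow> 'a \<Rightarrow> bool" where
  "is_rad M r a \<longleftrightarrow> mdvd M r a \<and> msquarefree M r \<and>
     (\<forall>p. mprime M p \<and> mdvd M p a \<longrightarrow> mdvd M p r)"

text \<open>abc with exponent 1+1/3 and constant K:  c < K rad(abc)^(4/3), equivalently c^3 < K^3 rad(abc)^4.\<close>
definition abc_third :: "'a Lstr \<Rightarrow> nat \<Rightarrow> bool" where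
  "abc_third M K \<longleftrightarrow>
     (\<forall>a b c r. mcoprime M a b \<and> mcoprime M a c \<and> mcoprime M b c \<and> add M a b = c \<and>
        is_rad M r (mul M (mul M a b) c) \<longrightarrow>
        lt M (mul M c (mul M c c)) (mul M (nm M (K ^ 3)) (mul M (mul M r r) (mul M r r))))"

definition exp_sigma1 :: "'a Lstr \<Rightarrow> ('a \<Rightarrow> 'a \<Rightarrow> 'a) \<Rightarrow> bool" where
  "exp_sigma1 M f \<longleftrightarrow>
     (\<exists>p. sigma1 p \<and>
        (\<forall>v. sat M v p \<longleftrightarrow> f (v 0) (v 1) = v 2)) \<and>
     (\<forall>x. f x (zer M) = one M) \<and>
     (\<forall>x y. f x (add M y (one M)) = mul M (f x y) x)"

definition catalan :: "'a Lstr \<Rightarrow> 'a set \<Rightarrow> 'a set \<Rightarrow> ('a \<Rightarrow> 'a \<Rightarrow> 'a) \<Rightarrow> bool" where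
  "catalan M B A f \<longleftrightarrow>
     (\<forall>x\<in>B. \<forall>y\<in>B. \<forall>a\<in>A. \<forall>b\<in>A.
        lt M (one M) x \<and> lt M (one M) y \<and> lt M (one M) a \<and> lt M (one M) b \<and>
        f x a = add M (f y b) (one M) \<longrightarrow>
        x = nm M 3 \<and> a = nm M 2 \<and> y = nm M 2 \<and> b = nm M 3)"

definition presburger_sub :: "'a Lstr \<Rightarrow> 'a set \<Rightarrow> bool" where
  "presburger_sub M A \<longleftrightarrow>
     zer M \<in> A \<and> one M \<in> A \<and>
     (\<forall>x\<in>A. \<forall>y\<in>A. add M x y \<in> A \<and> mul M x y \<in> A) \<and>
     (\<forall>z\<in>A. zer M \<noteq> add M z (one M)) \<and>
     (\<forall>x\<in>A. x \<noteq> zer M \<longrightarrow> (\<exists>z\<in>A. x = add M z (one M))) \<and>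
     (\<forall>x\<in>A. \<forall>y\<in>A. \<forall>z\<in>A. add M x z = add M y z \<longrightarrow> x = y) \<and>
     (\<forall>x\<in>A. add M x (zer M) = x) \<and>
     (\<forall>x\<in>A. \<forall>y\<in>A. \<forall>z\<in>A. add M (add M x y) z = add M x (add M y z)) \<and>
     (\<forall>x\<in>A. \<forall>y\<in>A. add M x y = add M y x) \<and>
     (\<forall>x\<in>A. \<forall>y\<in>A. leq M x y \<longleftrightarrow> (\<exists>z\<in>A. add M x z = y)) \<and>
     (\<forall>n::nat. 0 < n \<longrightarrow> (\<forall>x\<in>A. \<exists>y\<in>A.
        leq M (madd M n y) x \<and> lt M x (madd M n (add M y (one M)))))"

text \<open>Exp': the L^e-structure (M, e) with e : M x A -> M (values outside M x A are irrelevant).\<close>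
definition ExpPrime :: "'a Lstr \<Rightarrow> 'a set \<Rightarrow> ('a \<Rightarrow> 'a \<Rightarrow> 'a) \<Rightarrow> bool" where
  "ExpPrime M A e \<longleftrightarrow> presburger_sub M A \<and>
     (\<forall>x. \<forall>y\<in>A. \<forall>z\<in>A.
        ((x = one M \<or> y = zer M) \<longleftrightarrow> e x y = one M) \<and>
        (x \<noteq> zer M \<longrightarrow> e x y \<noteq> zer M) \<and>
        e x (one M) = x \<and>
        e x (add M y z) = mul M (e x y) (e x z))"

end

theory Submission
  imports Defs
begin

text \<open>
  Let x^a = y^b + 1 with the exponentiation e, and put u = e x a, v = e y b. Presburger
  division gives a = 5q + j with j < 5, so either a is a standard number, or u = (e x q)^5 x^j
  is at least the fifth power of \<alpha> = e x q, a divisor of u divisible by every prime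
  factor of u; likewise for v with some \<beta>. For the coprime triple v + 1 = u the abc
  inequality gives u^3 < K^3 rad(uv)^4 \<le> K^3 (\<alpha>\<beta>)^4; raising it to the fifth power and
  using \<alpha>^2 \<le> u, \<beta>^2 \<le> v \<le> u together with the fifth-power bound on one side yields
  u < K^15. As x^a \<ge> 2^a, a bounded u forces a and b to be standard, and on standard
  exponents e agrees with the definable exponential, for which Catalan's conjecture holds.
  The arithmetic used on the way (semiring laws, division with remainder, Euclid's lemma,
  radicals) is obtained from \<Sigma>1-induction.
\<close>

section \<open>Models of I\<Sigma>1 as discretely ordered semirings\<close>

locale isigma1_model =
  fixes M :: "'a Lstr"
  assumes isigma1: "ISigma1 M"
begin

abbreviation mzero (\<open>\<zero>\<close>) where "\<zero> \<equiv> zer M"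
abbreviation munit (\<open>\<one>\<close>) where "\<one> \<equiv> one M"
abbreviation mplus (infixl \<open>\<oplus>\<close> 65) where "x \<oplus> y \<equiv> add M x y"
abbreviation mtimes (infixl \<open>\<otimes>\<close> 70) where "x \<otimes> y \<equiv> mul M x y"
abbreviation mle (infix \<open>\<preceq>\<close> 50) where "x \<preceq> y \<equiv> leq M x y"
abbreviation mless (infix \<open>\<prec>\<close> 50) where "x \<prec> y \<equiv> lt M x y"

lemma succ_neq_zero [simp]: "x \<oplus> \<one> \<noteq> \<zero>" "\<zero> \<noteq> x \<oplus> \<one>"
  and succ_inject [simp]: "x \<oplus> \<one> = y \<oplus> \<one> \<longleftrightarrow> x = y"
  and zero_or_succ: "x \<noteq> \<zero> \<Longrightarrow> \<exists>y. x = y \<oplus> \<one>"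
  and add_zero_right [simp]: "x \<oplus> \<zero> = x"
  and add_succ_right: "x \<oplus> (y \<oplus> \<one>) = (x \<oplus> y) \<oplus> \<one>"
  and mul_zero_right [simp]: "x \<otimes> \<zero> = \<zero>"
  and mul_succ_right: "x \<otimes> (y \<oplus> \<one>) = x \<otimes> y \<oplus> x"
  and le_iff_add: "x \<preceq> y \<longleftrightarrow> (\<exists>z. x \<oplus> z = y)"
  using isigma1 unfolding ISigma1_def RobQ_def by metis+

lemma sigma1_induct:
  assumes "sigma1 p" and "\<And>a. sat M (v(x := a)) p \<longleftrightarrow> P a"
    and "P \<zero>" and "\<And>a. P a \<Longrightarrow> P (a \<oplus> \<one>)"
  shows "P a"
  using isigma1 assms unfolding ISigma1_def by metis

lemma add_zero_left [simp]: "\<zero> \<oplus> x = x"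
  by (rule sigma1_induct[where p="Eq (Pls Zr (Var 0)) (Var 0)" and x=0 and v="\<lambda>_. \<zero>" and a=x])
     (simp_all add: add_succ_right)

lemma add_assoc: "(x \<oplus> y) \<oplus> z = x \<oplus> (y \<oplus> z)"
  by (rule sigma1_induct[where p="Eq (Pls (Pls (Var 1) (Var 2)) (Var 0)) (Pls (Var 1) (Pls (Var 2) (Var 0)))"
        and x=0 and v="\<lambda>i. if i = 1 then x else y" and a=z])
     (simp_all add: add_succ_right)

lemma add_succ_left: "(x \<oplus> \<one>) \<oplus> y = (x \<oplus> y) \<oplus> \<one>"
  by (rule sigma1_induct[where p="Eq (Pls (Pls (Var 1) On) (Var 0)) (Pls (Pls (Var 1) (Var 0)) On)"
        and x=0 and v="\<lambda>_. x" and a=y])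
     (simp_all add: add_succ_right)

lemma add_comm: "x \<oplus> y = y \<oplus> x"
  by (rule sigma1_induct[where p="Eq (Pls (Var 1) (Var 0)) (Pls (Var 0) (Var 1))"
        and x=0 and v="\<lambda>_. x" and a=y])
     (simp_all add: add_succ_right add_succ_left)

lemma add_left_comm: "x \<oplus> (y \<oplus> z) = y \<oplus> (x \<oplus> z)"
  by (simp only: add_assoc[symmetric] add_comm[of x y])

lemma mul_zero_left [simp]: "\<zero> \<otimes> x = \<zero>"
  by (rule sigma1_induct[where p="Eq (Tms Zr (Var 0)) Zr" and x=0 and v="\<lambda>_. \<zero>" and a=x])
     (simp_all add: mul_succ_right)

lemma mul_add_right: "x \<otimes> (y \<oplus> z) = x \<otimes> y \<oplus> x \<otimes> z"
  by (rule sigma1_induct[where p="Eq (Tms (Var 1) (Pls (Var 2) (Var 0))) (Pls (Tms (Var 1) (Var 2)) (Tms (Var 1) (Var 0)))"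
        and x=0 and v="\<lambda>i. if i = 1 then x else y" and a=z])
     (simp_all add: mul_succ_right add_succ_right, simp add: add_assoc)

lemma mul_one_right [simp]: "x \<otimes> \<one> = x"
  using mul_succ_right[of x "\<zero>"] by simp

lemma mul_succ_left: "(x \<oplus> \<one>) \<otimes> y = x \<otimes> y \<oplus> y"
  by (rule sigma1_induct[where p="Eq (Tms (Pls (Var 1) On) (Var 0)) (Pls (Tms (Var 1) (Var 0)) (Var 0))"
        and x=0 and v="\<lambda>_. x" and a=y])
     (simp_all add: mul_succ_right add_succ_right add_assoc add_comm add_left_comm)

lemma mul_comm: "x \<otimes> y = y \<otimes> x"
  by (rule sigma1_induct[where p="Eq (Tms (Var 1) (Var 0)) (Tms (Var 0) (Var 1))"
        and x=0 and v="\<lambda>_. x" and a=y])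
     (simp_all add: mul_succ_right mul_succ_left)

lemma mul_assoc: "(x \<otimes> y) \<otimes> z = x \<otimes> (y \<otimes> z)"
  by (rule sigma1_induct[where p="Eq (Tms (Tms (Var 1) (Var 2)) (Var 0)) (Tms (Var 1) (Tms (Var 2) (Var 0)))"
        and x=0 and v="\<lambda>i. if i = 1 then x else y" and a=z])
     (simp_all add: mul_succ_right mul_add_right)

sublocale arith: comm_semiring_1 "mul M" "one M" "add M" "zer M"
proof
  show "(x \<oplus> y) \<otimes> z = x \<otimes> z \<oplus> y \<otimes> z" for x y z
    by (simp add: mul_comm[of _ z] mul_add_right)
  show "\<one> \<otimes> x = x" for x
    using mul_succ_left[of "\<zero>" x] by simp
  show "\<zero> \<noteq> \<one>"
    using succ_neq_zero(2)[of "\<zero>"] by simp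
qed (fact add_assoc add_comm add_zero_left mul_assoc mul_comm mul_zero_left mul_zero_right)+

lemma add_right_cancel [simp]: "x \<oplus> z = y \<oplus> z \<longleftrightarrow> x = y"
proof -
  have "x \<oplus> z = y \<oplus> z \<longrightarrow> x = y"
    by (rule sigma1_induct[where p="Impl (Eq (Pls (Var 1) (Var 0)) (Pls (Var 2) (Var 0))) (Eq (Var 1) (Var 2))"
          and x=0 and v="\<lambda>i. if i = 1 then x else y" and a=z])
       (simp_all add: add_succ_right)
  then show ?thesis by blast
qed

lemma add_left_cancel [simp]: "z \<oplus> x = z \<oplus> y \<longleftrightarrow> x = y"
  by (simp add: add_comm[of z])

lemma add_eq_self_iff [simp]: "x \<oplus> y = x \<longleftrightarrow> y = \<zero>"
  using add_left_cancel[of x y "\<zero>"] by simp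

lemma self_eq_add_iff [simp]: "x = x \<oplus> y \<longleftrightarrow> y = \<zero>"
  using add_eq_self_iff[of x y] by metis

lemma add_eq_zero_iff [simp]: "x \<oplus> y = \<zero> \<longleftrightarrow> x = \<zero> \<and> y = \<zero>"
  by (metis add_zero_right add_succ_right succ_neq_zero(1) zero_or_succ)

lemma mul_eq_zero_iff [simp]: "x \<otimes> y = \<zero> \<longleftrightarrow> x = \<zero> \<or> y = \<zero>"
  by (metis add_eq_zero_iff mul_succ_right mul_zero_left mul_zero_right zero_or_succ)

lemma le_antisym: "x \<preceq> y \<Longrightarrow> y \<preceq> x \<Longrightarrow> x = y"
  unfolding le_iff_add by (metis add_assoc add_eq_self_iff add_eq_zero_iff add_zero_right)

lemma le_total: "x \<preceq> y \<or> y \<preceq> x"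
proof (rule sigma1_induct[where p="Disj (Le (Var 1) (Var 0)) (Le (Var 0) (Var 1))"
      and x=0 and v="\<lambda>_. x" and a=y])
  fix a assume "x \<preceq> a \<or> a \<preceq> x"
  then show "x \<preceq> a \<oplus> \<one> \<or> a \<oplus> \<one> \<preceq> x"
    unfolding le_iff_add by (metis add_assoc add_succ_left add_zero_right zero_or_succ)
qed (auto simp: le_iff_add)

lemma lt_iff_le_not_le: "x \<prec> y \<longleftrightarrow> x \<preceq> y \<and> \<not> y \<preceq> x"
  using le_antisym unfolding lt_def by blast

sublocale arith: linordered_nonzero_semiring "one M" "mul M" "leq M" "lt M" "add M" "zer M"
proof
  show "x \<preceq> x" for x
    unfolding le_iff_add by (metis add_zero_right)
  show "x \<preceq> y \<Longrightarrow> y \<preceq> z \<Longrightarrow> x \<preceq> z" for x y z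
    unfolding le_iff_add by (metis add_assoc)
  show "x \<preceq> y \<Longrightarrow> z \<oplus> x \<preceq> z \<oplus> y" for x y z
    unfolding le_iff_add by (metis add_assoc)
  show "x \<preceq> y \<Longrightarrow> z \<otimes> x \<preceq> z \<otimes> y" for x y z
    unfolding le_iff_add by (metis mul_add_right)
  show "\<zero> \<prec> \<one>"
    unfolding lt_def le_iff_add by (metis add_zero_left arith.zero_neq_one)
  show "x \<prec> y \<Longrightarrow> x \<oplus> \<one> \<prec> y \<oplus> \<one>" for x y
    unfolding lt_def le_iff_add by (metis add_succ_left succ_inject)
qed (fact lt_iff_le_not_le le_antisym le_total arith.mult.assoc arith.mult_1_left arith.mult_1_right)+

lemma zero_le [simp]: "\<zero> \<preceq> x"
  unfolding le_iff_add by (metis add_zero_left)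

lemma add_le_cancel_left [simp]: "z \<oplus> x \<preceq> z \<oplus> y \<longleftrightarrow> x \<preceq> y"
  unfolding le_iff_add by (metis add_assoc add_left_cancel)

lemma add_less_cancel_left [simp]: "z \<oplus> x \<prec> z \<oplus> y \<longleftrightarrow> x \<prec> y"
  by (simp add: arith.less_le)

lemma less_iff_succ_le: "x \<prec> y \<longleftrightarrow> x \<oplus> \<one> \<preceq> y"
proof
  assume "x \<prec> y"
  then obtain z where "x \<oplus> z = y" "z \<noteq> \<zero>"
    unfolding arith.less_le le_iff_add by auto
  then show "x \<oplus> \<one> \<preceq> y"
    unfolding le_iff_add by (metis add_assoc add_comm zero_or_succ)
next
  assume "x \<oplus> \<one> \<preceq> y"
  then show "x \<prec> y"
    unfolding lt_def le_iff_add by (metis add_assoc self_eq_add_iff add_eq_zero_iff arith.zero_neq_one)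
qed

lemma less_succ_iff: "x \<prec> y \<oplus> \<one> \<longleftrightarrow> x \<preceq> y"
  using add_le_cancel_left[of "\<one>" x y] by (simp add: less_iff_succ_le add_comm)

lemma one_le_iff [simp]: "\<one> \<preceq> x \<longleftrightarrow> x \<noteq> \<zero>"
  using less_iff_succ_le[of "\<zero>" x] arith.less_le by auto

lemma mul_strict_mono_left: "x \<prec> y \<Longrightarrow> c \<noteq> \<zero> \<Longrightarrow> c \<otimes> x \<prec> c \<otimes> y"
  unfolding arith.less_le le_iff_add by (auto simp: arith.distrib_left)

lemma mul_le_cancel_left: "c \<noteq> \<zero> \<Longrightarrow> c \<otimes> x \<preceq> c \<otimes> y \<longleftrightarrow> x \<preceq> y"
  using mul_strict_mono_left arith.mult_left_mono arith.not_le by (metis zero_le)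

lemma mul_less_cancel_left: "c \<noteq> \<zero> \<Longrightarrow> c \<otimes> x \<prec> c \<otimes> y \<longleftrightarrow> x \<prec> y"
  using mul_le_cancel_left arith.not_le by metis

lemma mul_left_cancel: "c \<noteq> \<zero> \<Longrightarrow> c \<otimes> x = c \<otimes> y \<longleftrightarrow> x = y"
  using mul_le_cancel_left le_antisym arith.order_refl by metis

lemma le_mul_left: "c \<noteq> \<zero> \<Longrightarrow> x \<preceq> c \<otimes> x"
  using arith.mult_right_mono[of "\<one>" c x] by simp

lemma not_less_zero [simp]: "\<not> x \<prec> \<zero>"
  using arith.not_less zero_le by blast

section \<open>Least numbers, divisibility and radicals\<close>

\<comment> \<open>y must not occur in p: it is the bound variable of the induction formula\<close>
lemma delta0_least:
  assumes "delta0 p" and "y \<noteq> x" and "\<And>u a. sat M (v(y := u, x := a)) p \<longleftrightarrow> P a"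
    and "P c"
  shows "\<exists>c. P c \<and> (\<forall>d. d \<prec> c \<longrightarrow> \<not> P d)"
proof (rule ccontr)
  assume no_least: "\<nexists>c. P c \<and> (\<forall>d. d \<prec> c \<longrightarrow> \<not> P d)"
  have "\<forall>d. d \<preceq> n \<longrightarrow> \<not> P d" for n
  proof (rule sigma1_induct[where p="BAll x (Var y) (Neg p)" and x=y and v=v and a=n])
    show "sigma1 (BAll x (Var y) (Neg p))"
      using assms(1) by simp
    show "sat M (v(y := a)) (BAll x (Var y) (Neg p)) \<longleftrightarrow> (\<forall>d. d \<preceq> a \<longrightarrow> \<not> P d)" for a
      using assms(3) by simp
    show "\<forall>d. d \<preceq> \<zero> \<longrightarrow> \<not> P d"
      using no_least arith.not_less by (metis zero_le le_antisym)
    show "\<forall>d. d \<preceq> a \<oplus> \<one> \<longrightarrow> \<not> P d" if "\<forall>d. d \<preceq> a \<longrightarrow> \<not> P d" for a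
      using that no_least by (metis less_succ_iff arith.le_less)
  qed
  then show False
    using assms(4) arith.order_refl by blast
qed

lemma div_mod_exists:
  assumes "p \<noteq> \<zero>"
  shows "\<exists>q r. a = p \<otimes> q \<oplus> r \<and> r \<prec> p"
proof -
  have "\<exists>q r. a = p \<otimes> q \<oplus> r \<and> r \<oplus> \<one> \<preceq> p"
  proof (rule sigma1_induct[where p="Ex 3 (Ex 4 (Conj (Eq (Var 0) (Pls (Tms (Var 1) (Var 3)) (Var 4)))
        (Le (Pls (Var 4) On) (Var 1))))" and x=0 and v="\<lambda>_. p" and a=a])
    fix a assume "\<exists>q r. a = p \<otimes> q \<oplus> r \<and> r \<oplus> \<one> \<preceq> p"
    then obtain q r where qr: "a = p \<otimes> q \<oplus> r" "r \<oplus> \<one> \<preceq> p" by blast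
    show "\<exists>q r. a \<oplus> \<one> = p \<otimes> q \<oplus> r \<and> r \<oplus> \<one> \<preceq> p"
    proof (cases "r \<oplus> \<one> = p")
      case True
      then have "a \<oplus> \<one> = p \<otimes> (q \<oplus> \<one>) \<oplus> \<zero>"
        using qr(1) by (simp add: mul_succ_right add_assoc)
      then show ?thesis
        using assms by fastforce
    next
      case False
      then have "r \<oplus> \<one> \<oplus> \<one> \<preceq> p"
        using qr(2) less_iff_succ_le arith.less_le by blast
      moreover have "a \<oplus> \<one> = p \<otimes> q \<oplus> (r \<oplus> \<one>)"
        using qr(1) by (simp add: add_assoc)
      ultimately show ?thesis by blast
    qed
  qed (use assms in \<open>simp_all, metis add_zero_left mul_zero_right one_le_iff\<close>)
  then show ?thesis
    using less_iff_succ_le by blast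
qed

abbreviation mdvd_syntax (infix \<open>\<triangleleft>\<close> 50) where "d \<triangleleft> a \<equiv> mdvd M d a"

lemma mdvd_iff_bounded: "d \<triangleleft> a \<longleftrightarrow> (\<exists>k. k \<preceq> a \<and> d \<otimes> k = a)"
  unfolding mdvd_def by (metis le_mul_left mul_eq_zero_iff zero_le)

lemma mdvd_refl [simp]: "a \<triangleleft> a"
  unfolding mdvd_def by (metis mul_one_right)

lemma one_mdvd [simp]: "\<one> \<triangleleft> a"
  unfolding mdvd_def by (metis arith.mult_1_left)

lemma mdvd_zero [simp]: "a \<triangleleft> \<zero>"
  unfolding mdvd_def by (metis mul_zero_right)

lemma zero_mdvd_iff [simp]: "\<zero> \<triangleleft> a \<longleftrightarrow> a = \<zero>"
  unfolding mdvd_def by auto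

lemma mdvd_triv_left [simp]: "a \<triangleleft> a \<otimes> b"
  unfolding mdvd_def by blast

lemma mdvd_triv_right [simp]: "a \<triangleleft> b \<otimes> a"
  unfolding mdvd_def by (metis arith.mult.commute)

lemma mdvd_trans: "a \<triangleleft> b \<Longrightarrow> b \<triangleleft> c \<Longrightarrow> a \<triangleleft> c"
  unfolding mdvd_def by (metis mul_assoc)

lemma mdvd_mult: "a \<triangleleft> c \<Longrightarrow> a \<triangleleft> b \<otimes> c"
  and mdvd_mult2: "a \<triangleleft> b \<Longrightarrow> a \<triangleleft> b \<otimes> c"
  using mdvd_trans mdvd_triv_left mdvd_triv_right by blast+

lemma mult_mdvd_mono: "a \<triangleleft> b \<Longrightarrow> c \<triangleleft> d \<Longrightarrow> a \<otimes> c \<triangleleft> b \<otimes> d"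
  unfolding mdvd_def by (metis arith.mult.assoc arith.mult.left_commute)

lemma mdvd_add_cancel_left:
  assumes "d \<triangleleft> a \<oplus> b" and "d \<triangleleft> a"
  shows "d \<triangleleft> b"
proof -
  obtain k l where k: "d \<otimes> k = a" and l: "d \<otimes> l = a \<oplus> b"
    using assms unfolding mdvd_def by blast
  show ?thesis
  proof (cases "d = \<zero>")
    case True
    then show ?thesis
      using k l by (metis add_zero_left mul_zero_left mdvd_zero)
  next
    case False
    have "k \<preceq> l"
      using k l False by (metis le_iff_add mul_le_cancel_left)
    then obtain w where "l = k \<oplus> w"
      unfolding le_iff_add by metis
    then have "d \<otimes> w = b"
      using k l by (simp add: arith.distrib_left)
    then show ?thesis
      unfolding mdvd_def by blast
  qed
qed

lemma mdvd_imp_le: "d \<triangleleft> a \<Longrightarrow> a \<noteq> \<zero> \<Longrightarrow> d \<preceq> a"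
  unfolding mdvd_def by (metis le_mul_left mul_eq_zero_iff arith.mult.commute)

lemma mdvd_one: "d \<triangleleft> \<one> \<Longrightarrow> d = \<one>"
proof -
  assume "d \<triangleleft> \<one>"
  moreover from this have "d \<noteq> \<zero>"
    unfolding mdvd_def by auto
  ultimately show "d = \<one>"
    using le_antisym mdvd_imp_le one_le_iff by blast
qed

abbreviation mprime_syntax (\<open>prime\<^sub>M\<close>) where "prime\<^sub>M p \<equiv> mprime M p"

lemma mprime_nonzero: "prime\<^sub>M p \<Longrightarrow> p \<noteq> \<zero>"
  and mprime_neq_one: "prime\<^sub>M p \<Longrightarrow> p \<noteq> \<one>"
  unfolding mprime_def arith.less_le by auto

lemma exists_mprime_mdvd:
  assumes "\<one> \<prec> a"
  shows "\<exists>q. prime\<^sub>M q \<and> q \<triangleleft> a"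
proof -
  have "\<exists>c. (\<one> \<prec> c \<and> c \<triangleleft> a) \<and> (\<forall>d. d \<prec> c \<longrightarrow> \<not> (\<one> \<prec> d \<and> d \<triangleleft> a))"
  proof (rule delta0_least[where p="Conj (Le (Pls On On) (Var 0)) (BEx 2 (Var 1) (Eq (Tms (Var 0) (Var 2)) (Var 1)))"
        and x=0 and y=3 and v="\<lambda>_. a" and c=a])
    show "sat M ((\<lambda>_. a)(3 := u, 0 := c)) (Conj (Le (Pls On On) (Var 0))
        (BEx 2 (Var 1) (Eq (Tms (Var 0) (Var 2)) (Var 1)))) \<longleftrightarrow> \<one> \<prec> c \<and> c \<triangleleft> a" for u c
      by (simp add: less_iff_succ_le mdvd_iff_bounded)
  qed (use assms in simp_all)
  then obtain c where c: "\<one> \<prec> c" "c \<triangleleft> a"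
    and least: "\<forall>d. d \<prec> c \<longrightarrow> \<not> (\<one> \<prec> d \<and> d \<triangleleft> a)" by blast
  have "prime\<^sub>M c"
    unfolding mprime_def
  proof (intro conjI allI impI c(1))
    fix d assume "d \<triangleleft> c"
    moreover have "c \<noteq> \<zero>" using c(1) by auto
    ultimately have "d \<noteq> \<zero>" "d \<preceq> c" "d \<triangleleft> a"
      using mdvd_imp_le mdvd_trans c(2) unfolding mdvd_def by auto
    then show "d = \<one> \<or> d = c"
      using least arith.less_le one_le_iff by blast
  qed
  then show ?thesis using c by blast
qed

\<comment> \<open>the least nonzero element of the ideal {x. p | x b} divides all its elements\<close>
lemma exists_mdvd_mult_generator:
  assumes "p \<noteq> \<zero>"
  obtains c where "c \<noteq> \<zero>" and "p \<triangleleft> c \<otimes> b" and "\<And>x. p \<triangleleft> x \<otimes> b \<Longrightarrow> c \<triangleleft> x"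
proof -
  have "\<exists>c. (c \<noteq> \<zero> \<and> p \<triangleleft> c \<otimes> b) \<and> (\<forall>d. d \<prec> c \<longrightarrow> \<not> (d \<noteq> \<zero> \<and> p \<triangleleft> d \<otimes> b))"
  proof (rule delta0_least[where p="Conj (Le On (Var 0))
        (BEx 3 (Tms (Var 0) (Var 2)) (Eq (Tms (Var 1) (Var 3)) (Tms (Var 0) (Var 2))))"
        and x=0 and y=4 and v="\<lambda>i. if i = 1 then p else b" and c=p])
    show "sat M ((\<lambda>i. if i = 1 then p else b)(4 := u, 0 := c)) (Conj (Le On (Var 0))
        (BEx 3 (Tms (Var 0) (Var 2)) (Eq (Tms (Var 1) (Var 3)) (Tms (Var 0) (Var 2)))))
        \<longleftrightarrow> c \<noteq> \<zero> \<and> p \<triangleleft> c \<otimes> b" for u c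
      by (simp add: mdvd_iff_bounded)
  qed (use assms in simp_all)
  then obtain c where c: "c \<noteq> \<zero>" "p \<triangleleft> c \<otimes> b"
    and least: "\<forall>d. d \<prec> c \<longrightarrow> \<not> (d \<noteq> \<zero> \<and> p \<triangleleft> d \<otimes> b)" by blast
  have "c \<triangleleft> x" if "p \<triangleleft> x \<otimes> b" for x
  proof -
    obtain q r where qr: "x = c \<otimes> q \<oplus> r" "r \<prec> c"
      using div_mod_exists c(1) by blast
    then have "x \<otimes> b = c \<otimes> b \<otimes> q \<oplus> r \<otimes> b"
      by (simp add: arith.distrib_left arith.mult_ac)
    then have "p \<triangleleft> r \<otimes> b"
      using mdvd_add_cancel_left mdvd_mult2 c(2) that by metis
    then have "r = \<zero>"
      using least qr(2) by blast
    then show "c \<triangleleft> x"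
      using qr(1) unfolding mdvd_def by auto
  qed
  then show ?thesis
    using that c by blast
qed

lemma mprime_mdvd_mult:
  assumes p: "prime\<^sub>M p" and "p \<triangleleft> a \<otimes> b"
  shows "p \<triangleleft> a \<or> p \<triangleleft> b"
proof -
  obtain c where "p \<triangleleft> c \<otimes> b" and generator: "\<And>x. p \<triangleleft> x \<otimes> b \<Longrightarrow> c \<triangleleft> x"
    using exists_mdvd_mult_generator mprime_nonzero p by metis
  moreover have "c = \<one> \<or> c = p"
    using generator[of p] p unfolding mprime_def by simp
  ultimately show ?thesis
    using generator[OF assms(2)] by auto
qed

lemma msquarefree_iff_bounded:
  "msquarefree M r \<longleftrightarrow> (\<forall>d k. d \<preceq> r \<longrightarrow> k \<preceq> r \<longrightarrow> d \<otimes> d \<otimes> k = r \<longrightarrow> d = \<one>)"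
proof
  assume bounded: "\<forall>d k. d \<preceq> r \<longrightarrow> k \<preceq> r \<longrightarrow> d \<otimes> d \<otimes> k = r \<longrightarrow> d = \<one>"
  have "r \<noteq> \<zero>"
  proof
    assume "r = \<zero>"
    then show False
      using bounded[rule_format, of "\<zero>" "\<zero>"] arith.zero_neq_one by simp
  qed
  then show "msquarefree M r"
    unfolding msquarefree_def using bounded mdvd_imp_le mdvd_triv_left mdvd_triv_right
    unfolding mdvd_def by (metis arith.mult.assoc)
qed (auto simp: msquarefree_def mdvd_def)

lemma msquarefree_nonzero: "msquarefree M r \<Longrightarrow> r \<noteq> \<zero>"
  unfolding msquarefree_def using arith.zero_neq_one mdvd_zero by metis

lemma msquarefree_one: "msquarefree M \<one>"
  unfolding msquarefree_def by (meson mdvd_one mdvd_trans mdvd_triv_left)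

lemma mprime_square_mdvd_mult:
  assumes q: "prime\<^sub>M q" and "\<not> q \<triangleleft> p" and qq: "q \<otimes> q \<triangleleft> p \<otimes> r"
  shows "q \<otimes> q \<triangleleft> r"
proof -
  have "q \<triangleleft> p \<otimes> r"
    using qq mdvd_trans mdvd_triv_left by blast
  then obtain r' where r': "r = q \<otimes> r'"
    using mprime_mdvd_mult q assms(2) unfolding mdvd_def by metis
  obtain k where "q \<otimes> (q \<otimes> k) = q \<otimes> (p \<otimes> r')"
    using qq r' unfolding mdvd_def by (metis arith.mult_ac)
  then have "q \<triangleleft> p \<otimes> r'"
    using mprime_nonzero[OF q] mul_left_cancel unfolding mdvd_def by metis
  then show ?thesis
    using r' mprime_mdvd_mult q assms(2) mult_mdvd_mono mdvd_refl by metis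
qed

lemma msquarefree_mult_mprime:
  assumes p: "prime\<^sub>M p" and "\<not> p \<triangleleft> r" and r: "msquarefree M r"
  shows "msquarefree M (p \<otimes> r)"
  unfolding msquarefree_def
proof (intro allI impI)
  fix d assume dd: "d \<otimes> d \<triangleleft> p \<otimes> r"
  show "d = \<one>"
  proof (rule ccontr)
    assume "d \<noteq> \<one>"
    moreover have "d \<noteq> \<zero>"
      using dd p r mprime_nonzero msquarefree_nonzero by auto
    ultimately obtain q where q: "prime\<^sub>M q" "q \<triangleleft> d"
      using exists_mprime_mdvd arith.less_le one_le_iff by metis
    have qq: "q \<otimes> q \<triangleleft> p \<otimes> r"
      using mult_mdvd_mono[OF q(2) q(2)] dd mdvd_trans by blast
    show False
    proof (cases "q \<triangleleft> p")
      case True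
      then have "q = p"
        using p q(1) mprime_neq_one unfolding mprime_def by blast
      then obtain k where "p \<otimes> (p \<otimes> k) = p \<otimes> r"
        using qq unfolding mdvd_def by (metis mul_assoc)
      then show False
        using assms(2) p mprime_nonzero mul_left_cancel unfolding mdvd_def by metis
    next
      case False
      then have "q \<otimes> q \<triangleleft> r"
        using mprime_square_mdvd_mult q(1) qq by blast
      then show False
        using r q(1) mprime_neq_one unfolding msquarefree_def by blast
    qed
  qed
qed

lemma exists_largest_msquarefree_mdvd:
  assumes "m \<noteq> \<zero>"
  obtains r where "msquarefree M r" and "r \<triangleleft> m"
    and "\<And>d. msquarefree M d \<Longrightarrow> d \<triangleleft> m \<Longrightarrow> d \<preceq> r"
proof -
  \<comment> \<open>the least k such that m - k is a squarefree divisor of m\<close>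
  let ?P = "\<lambda>k. \<exists>d. d \<preceq> m \<and> d \<oplus> k = m \<and> msquarefree M d \<and> d \<triangleleft> m"
  obtain k1 where k1: "m = k1 \<oplus> \<one>"
    using zero_or_succ assms by blast
  have "\<exists>c. ?P c \<and> (\<forall>d. d \<prec> c \<longrightarrow> \<not> ?P d)"
  proof (rule delta0_least[where p="BEx 1 (Var 2) (Conj (Eq (Pls (Var 1) (Var 0)) (Var 2)) (Conj
        (BAll 3 (Var 1) (BAll 4 (Var 1) (Impl (Eq (Tms (Tms (Var 3) (Var 3)) (Var 4)) (Var 1)) (Eq (Var 3) On))))
        (BEx 3 (Var 2) (Eq (Tms (Var 1) (Var 3)) (Var 2)))))"
        and x=0 and y=5 and v="\<lambda>_. m" and c=k1])
    show "sat M ((\<lambda>_. m)(5 := u, 0 := c)) (BEx 1 (Var 2) (Conj (Eq (Pls (Var 1) (Var 0)) (Var 2)) (Conj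
        (BAll 3 (Var 1) (BAll 4 (Var 1) (Impl (Eq (Tms (Tms (Var 3) (Var 3)) (Var 4)) (Var 1)) (Eq (Var 3) On))))
        (BEx 3 (Var 2) (Eq (Tms (Var 1) (Var 3)) (Var 2)))))) \<longleftrightarrow> ?P c" for u c
      by (simp add: msquarefree_iff_bounded mdvd_iff_bounded)
    show "?P k1"
      using k1 msquarefree_one assms by (intro exI[of _ "\<one>"]) (auto simp: add_comm)
  qed simp_all
  then obtain k0 r where r: "r \<oplus> k0 = m" "msquarefree M r" "r \<triangleleft> m"
    and least: "\<forall>d. d \<prec> k0 \<longrightarrow> \<not> ?P d" by blast
  have "d \<preceq> r" if "msquarefree M d" "d \<triangleleft> m" for d
  proof -
    have "d \<preceq> m"
      using that mdvd_imp_le assms by blast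
    then obtain k where k: "d \<oplus> k = m"
      unfolding le_iff_add by blast
    then have "k0 \<preceq> k"
      using that least arith.not_less le_iff_add by blast
    then obtain w where "k = k0 \<oplus> w"
      unfolding le_iff_add by metis
    then have "(d \<oplus> w) \<oplus> k0 = r \<oplus> k0"
      using k r(1) by (simp add: arith.add_ac)
    then have "d \<oplus> w = r"
      by simp
    then show ?thesis
      unfolding le_iff_add by blast
  qed
  then show ?thesis
    using that r(2,3) by blast
qed

lemma exists_is_rad:
  assumes "m \<noteq> \<zero>"
  shows "\<exists>r. is_rad M r m"
proof -
  obtain r where r: "msquarefree M r" "r \<triangleleft> m"
    and largest: "\<And>d. msquarefree M d \<Longrightarrow> d \<triangleleft> m \<Longrightarrow> d \<preceq> r"
    using exists_largest_msquarefree_mdvd assms by blast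
  have "p \<triangleleft> r" if p: "prime\<^sub>M p" "p \<triangleleft> m" for p
  proof (rule ccontr)
    assume "\<not> p \<triangleleft> r"
    moreover obtain j where j: "m = r \<otimes> j"
      using r(2) unfolding mdvd_def by metis
    ultimately have "p \<triangleleft> j"
      using mprime_mdvd_mult p by metis
    then have "r \<otimes> p \<triangleleft> m"
      using j mult_mdvd_mono mdvd_refl by metis
    then have "p \<otimes> r \<triangleleft> m"
      by (simp add: arith.mult.commute)
    moreover have "msquarefree M (p \<otimes> r)"
      using msquarefree_mult_mprime p(1) \<open>\<not> p \<triangleleft> r\<close> r(1) by blast
    ultimately have "p \<otimes> r \<preceq> \<one> \<otimes> r"
      using largest by simp
    then have "p \<preceq> \<one>"
      using mul_le_cancel_left msquarefree_nonzero r(1) by (metis arith.mult.commute)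
    then show False
      using p(1) arith.not_le unfolding mprime_def by blast
  qed
  then show ?thesis
    using r unfolding is_rad_def by blast
qed

lemma is_rad_mdvd_cover:
  assumes "is_rad M r m" and "m \<triangleleft> n" and "\<forall>p. prime\<^sub>M p \<and> p \<triangleleft> n \<longrightarrow> p \<triangleleft> m"
  shows "is_rad M r n"
  using assms mdvd_trans unfolding is_rad_def by blast

end

section \<open>Powers with standard exponents\<close>

fun mpow :: "'a Lstr \<Rightarrow> 'a \<Rightarrow> nat \<Rightarrow> 'a" where
  "mpow M x 0 = one M"
| "mpow M x (Suc n) = mul M (mpow M x n) x"

context isigma1_model
begin

lemma mpow_add: "mpow M x (m + n) = mpow M x m \<otimes> mpow M x n"
  by (induct n) (simp_all add: arith.mult_ac)

lemma mpow_mult: "mpow M x (m * n) = mpow M (mpow M x m) n"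
  by (induct n) (simp_all add: mpow_add arith.mult_ac)

lemma mpow_mult_distrib: "mpow M (x \<otimes> y) n = mpow M x n \<otimes> mpow M y n"
  by (induct n) (simp_all add: arith.mult_ac)

lemma mpow_nonzero: "x \<noteq> \<zero> \<Longrightarrow> mpow M x n \<noteq> \<zero>"
  by (induct n) simp_all

lemma mpow_mono: "x \<preceq> y \<Longrightarrow> mpow M x n \<preceq> mpow M y n"
  by (induct n) (simp_all add: arith.mult_mono)

lemma mpow_strict_mono:
  assumes "x \<prec> y" and "0 < n"
  shows "mpow M x n \<prec> mpow M y n"
  using assms(2)
proof (induct n rule: nat_induct_non_zero)
  case 1
  show ?case using assms(1) by simp
next
  case (Suc n)
  have "y \<noteq> \<zero>"
    using assms(1) by auto
  have "mpow M x n \<otimes> x \<preceq> mpow M x n \<otimes> y"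
    using assms(1) arith.less_imp_le arith.mult_left_mono zero_le by blast
  also have "\<dots> \<prec> mpow M y n \<otimes> y"
    using mul_strict_mono_left[OF Suc.hyps(2) \<open>y \<noteq> \<zero>\<close>] arith.mult.commute by metis
  finally show ?case
    by (simp only: mpow.simps)
qed

lemma mpow_exp_mono:
  assumes "x \<noteq> \<zero>" and "m \<le> n"
  shows "mpow M x m \<preceq> mpow M x n"
proof -
  obtain k where "n = k + m"
    using assms(2) le_Suc_ex by (metis add.commute)
  then show ?thesis
    using le_mul_left[OF mpow_nonzero[OF assms(1)]] by (simp add: mpow_add)
qed

lemma mpow_ge_base: "x \<noteq> \<zero> \<Longrightarrow> 0 < n \<Longrightarrow> x \<preceq> mpow M x n"
  using mpow_exp_mono[of x 1 n] by simp

lemma mpow_mult_mono: "mpow M x m \<preceq> y \<Longrightarrow> mpow M x (m * n) \<preceq> mpow M y n"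
  by (simp add: mpow_mult mpow_mono)

lemma mdvd_mpow: "0 < n \<Longrightarrow> x \<triangleleft> mpow M x n"
  by (cases n) simp_all

lemma mprime_mdvd_mpow: "prime\<^sub>M p \<Longrightarrow> p \<triangleleft> mpow M x n \<Longrightarrow> p \<triangleleft> x"
  by (induct n) (auto dest: mdvd_one mprime_neq_one mprime_mdvd_mult)

lemma nm_add: "nm M (m + n) = nm M m \<oplus> nm M n"
  by (induct n) (simp_all add: add_assoc)

lemma nm_mult: "nm M (m * n) = nm M m \<otimes> nm M n"
  by (induct n) (simp_all add: nm_add arith.distrib_left add_comm)

lemma nm_power: "nm M (c ^ n) = mpow M (nm M c) n"
  by (induct n) (simp_all add: nm_mult arith.mult.commute)

lemma nm_strict_mono: "m < n \<Longrightarrow> nm M m \<prec> nm M n"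
  by (induct n) (auto simp: less_succ_iff less_Suc_eq arith.less_imp_le)

lemma less_nm_imp_nm: "x \<prec> nm M n \<Longrightarrow> \<exists>j<n. x = nm M j"
proof (induct n)
  case (Suc n)
  then have "x \<prec> nm M n \<or> x = nm M n"
    using less_succ_iff arith.le_less by auto
  then show ?case
    using Suc.hyps less_Suc_eq by blast
qed simp

lemma nm_two_power_le: "\<one> \<prec> x \<Longrightarrow> nm M (2 ^ n) \<preceq> mpow M x n"
  unfolding nm_power by (rule mpow_mono) (simp add: numeral_2_eq_2 less_iff_succ_le)

lemma madd_zero [simp]: "madd M n \<zero> = \<zero>"
  by (induct n) simp_all

lemma madd_succ: "madd M n (y \<oplus> \<one>) = madd M n y \<oplus> nm M n"
  by (induct n) (simp_all add: arith.add_ac)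

lemma exp_sigma1_nm: "exp_sigma1 M f \<Longrightarrow> f x (nm M n) = mpow M x n"
  unfolding exp_sigma1_def by (induct n) simp_all

lemma mcoprime_one: "mcoprime M a \<one>" "mcoprime M \<one> a"
  unfolding mcoprime_def using mdvd_one by blast+

lemma mcoprime_succ: "mcoprime M a (a \<oplus> \<one>)"
  unfolding mcoprime_def using mdvd_one mdvd_add_cancel_left by blast

end

section \<open>The abc bound for solutions of Catalan's equation\<close>

context isigma1_model
begin

definition radical_cover :: "'a \<Rightarrow> 'a \<Rightarrow> bool" where
  "radical_cover \<alpha> u \<longleftrightarrow> \<alpha> \<triangleleft> u \<and> (\<forall>p. prime\<^sub>M p \<and> p \<triangleleft> u \<longrightarrow> p \<triangleleft> \<alpha>)"

lemma radical_cover_mpow: "0 < n \<Longrightarrow> radical_cover x (mpow M x n)"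
  unfolding radical_cover_def using mdvd_mpow mprime_mdvd_mpow by blast

lemma radical_cover_mpow_mult:
  assumes "x \<triangleleft> \<alpha>" and "0 < n"
  shows "radical_cover \<alpha> (mpow M \<alpha> n \<otimes> mpow M x j)"
  unfolding radical_cover_def
proof (intro conjI allI impI)
  show "\<alpha> \<triangleleft> mpow M \<alpha> n \<otimes> mpow M x j"
    using mdvd_mpow[OF assms(2)] mdvd_mult2 by blast
  fix p assume "prime\<^sub>M p \<and> p \<triangleleft> mpow M \<alpha> n \<otimes> mpow M x j"
  then have "p \<triangleleft> \<alpha> \<or> p \<triangleleft> x"
    using mprime_mdvd_mult mprime_mdvd_mpow by blast
  then show "p \<triangleleft> \<alpha>"
    using assms(1) mdvd_trans by blast
qed

lemma mpow_three: "mpow M u 3 = u \<otimes> (u \<otimes> u)"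
  and mpow_four: "mpow M u 4 = (u \<otimes> u) \<otimes> (u \<otimes> u)"
  by (simp_all add: numeral_eq_Suc mul_assoc)

lemma abc_third_radical_cover:
  assumes abc: "abc_third M K" and uv: "u = v \<oplus> \<one>" and "v \<noteq> \<zero>"
    and \<alpha>: "radical_cover \<alpha> u" and \<beta>: "radical_cover \<beta> v"
  shows "mpow M u 3 \<prec> nm M (K ^ 3) \<otimes> mpow M (\<alpha> \<otimes> \<beta>) 4"
proof -
  have "\<alpha> \<otimes> \<beta> \<noteq> \<zero>"
    using \<alpha> \<beta> uv \<open>v \<noteq> \<zero>\<close> unfolding radical_cover_def by auto
  then obtain r where "is_rad M r (\<alpha> \<otimes> \<beta>)"
    using exists_is_rad by blast
  moreover have "\<alpha> \<otimes> \<beta> \<triangleleft> v \<otimes> \<one> \<otimes> u"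
    using mult_mdvd_mono \<alpha> \<beta> unfolding radical_cover_def by (metis arith.mult.commute mul_one_right)
  moreover have "p \<triangleleft> \<alpha> \<otimes> \<beta>" if "prime\<^sub>M p" "p \<triangleleft> v \<otimes> \<one> \<otimes> u" for p
    using that mprime_mdvd_mult \<alpha> \<beta> mdvd_mult mdvd_mult2 unfolding radical_cover_def
    by (metis mul_one_right)
  ultimately have r: "is_rad M r (v \<otimes> \<one> \<otimes> u)" "r \<triangleleft> \<alpha> \<otimes> \<beta>"
    using is_rad_mdvd_cover unfolding is_rad_def by blast+
  have "mcoprime M v \<one>" "mcoprime M v u" "mcoprime M \<one> u"
    using mcoprime_one mcoprime_succ uv by simp_all
  then have "mpow M u 3 \<prec> nm M (K ^ 3) \<otimes> mpow M r 4"
    using abc r(1) uv unfolding abc_third_def mpow_three mpow_four by simp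
  also have "\<dots> \<preceq> nm M (K ^ 3) \<otimes> mpow M (\<alpha> \<otimes> \<beta>) 4"
    using arith.mult_left_mono mpow_mono mdvd_imp_le[OF r(2) \<open>\<alpha> \<otimes> \<beta> \<noteq> \<zero>\<close>] zero_le by blast
  finally show ?thesis .
qed

lemma less_mpow_of_cube_bound:
  assumes "u \<noteq> \<zero>" and cube: "mpow M u 3 \<prec> k \<otimes> mpow M (\<alpha> \<otimes> \<beta>) 4"
    and \<alpha>: "mpow M \<alpha> 20 \<preceq> mpow M u s" and \<beta>: "mpow M \<beta> 20 \<preceq> mpow M u t" and "s + t < 15"
  shows "u \<prec> mpow M k 5"
proof -
  have "mpow M u (15 - (s + t)) \<otimes> mpow M u (s + t) = mpow M u 15"
    using \<open>s + t < 15\<close> by (simp flip: mpow_add)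
  also have "\<dots> = mpow M (mpow M u 3) 5"
    by (simp flip: mpow_mult)
  also have "\<dots> \<prec> mpow M k 5 \<otimes> (mpow M \<alpha> 20 \<otimes> mpow M \<beta> 20)"
    using mpow_strict_mono[OF cube, of 5] by (simp add: mpow_mult_distrib flip: mpow_mult)
  also have "\<dots> \<preceq> mpow M k 5 \<otimes> mpow M u (s + t)"
    using arith.mult_left_mono arith.mult_mono[OF \<alpha> \<beta>] zero_le by (simp add: mpow_add)
  finally have "mpow M u (15 - (s + t)) \<prec> mpow M k 5"
    using mul_less_cancel_left[OF mpow_nonzero[OF \<open>u \<noteq> \<zero>\<close>]] by (simp add: arith.mult.commute)
  moreover have "u \<preceq> mpow M u (15 - (s + t))"
    using mpow_ge_base \<open>u \<noteq> \<zero>\<close> \<open>s + t < 15\<close> by simp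
  ultimately show ?thesis
    using arith.le_less_trans by blast
qed

lemma abc_third_catalan_bound:
  assumes abc: "abc_third M K" and uv: "u = v \<oplus> \<one>" and "v \<noteq> \<zero>"
    and \<alpha>: "radical_cover \<alpha> u" "mpow M \<alpha> 2 \<preceq> u"
    and \<beta>: "radical_cover \<beta> v" "mpow M \<beta> 2 \<preceq> v"
    and fifth_power: "mpow M \<alpha> 5 \<preceq> u \<or> mpow M \<beta> 5 \<preceq> v"
  shows "u \<preceq> nm M (K ^ 15)"
proof -
  have "u \<noteq> \<zero>" and "v \<preceq> u"
    unfolding uv le_iff_add by auto
  have cube: "mpow M u 3 \<prec> nm M (K ^ 3) \<otimes> mpow M (\<alpha> \<otimes> \<beta>) 4"
    using abc_third_radical_cover[OF abc uv \<open>v \<noteq> \<zero>\<close> \<alpha>(1) \<beta>(1)] .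
  have \<alpha>_10: "mpow M \<alpha> 20 \<preceq> mpow M u 10"
    using mpow_mult_mono[of \<alpha> 2 _ 10] \<alpha>(2) by simp
  have \<beta>_10: "mpow M \<beta> 20 \<preceq> mpow M u 10"
    using mpow_mult_mono[of \<beta> 2 _ 10] \<beta>(2) \<open>v \<preceq> u\<close> arith.order_trans by simp
  from fifth_power have "u \<prec> mpow M (nm M (K ^ 3)) 5"
  proof
    assume "mpow M \<alpha> 5 \<preceq> u"
    then have "mpow M \<alpha> 20 \<preceq> mpow M u 4"
      using mpow_mult_mono[of \<alpha> 5 _ 4] by simp
    then show ?thesis
      using less_mpow_of_cube_bound[OF \<open>u \<noteq> \<zero>\<close> cube _ \<beta>_10] by simp
  next
    assume "mpow M \<beta> 5 \<preceq> v"
    then have "mpow M \<beta> 20 \<preceq> mpow M u 4"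
      using mpow_mult_mono[of \<beta> 5 _ 4] \<open>v \<preceq> u\<close> arith.order_trans by simp
    then show ?thesis
      using less_mpow_of_cube_bound[OF \<open>u \<noteq> \<zero>\<close> cube \<alpha>_10] by simp
  qed
  then show ?thesis
    using arith.less_imp_le by (simp add: nm_power flip: mpow_mult)
qed

end

section \<open>Models of Exp'\<close>

locale exp_model = isigma1_model +
  fixes A :: "'a set" and e :: "'a \<Rightarrow> 'a \<Rightarrow> 'a"
  assumes exp_prime: "ExpPrime M A e"
begin

lemma presburger_A: "presburger_sub M A"
  using exp_prime unfolding ExpPrime_def by simp

lemma zero_in_A: "\<zero> \<in> A"
  and one_in_A: "\<one> \<in> A"
  and add_in_A: "x \<in> A \<Longrightarrow> y \<in> A \<Longrightarrow> x \<oplus> y \<in> A"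
  and A_pred: "x \<in> A \<Longrightarrow> x \<noteq> \<zero> \<Longrightarrow> \<exists>z\<in>A. x = z \<oplus> \<one>"
  and A_le_iff: "x \<in> A \<Longrightarrow> y \<in> A \<Longrightarrow> x \<preceq> y \<longleftrightarrow> (\<exists>z\<in>A. x \<oplus> z = y)"
  and A_div: "0 < n \<Longrightarrow> x \<in> A \<Longrightarrow> \<exists>y\<in>A. madd M n y \<preceq> x \<and> x \<prec> madd M n (y \<oplus> \<one>)"
  using presburger_A unfolding presburger_sub_def by simp_all

lemma e_axioms:
  assumes "y \<in> A" and "z \<in> A"
  shows "(x = \<one> \<or> y = \<zero>) \<longleftrightarrow> e x y = \<one>" and "x \<noteq> \<zero> \<Longrightarrow> e x y \<noteq> \<zero>"
    and "e x \<one> = x" and "e x (y \<oplus> z) = e x y \<otimes> e x z"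
  using exp_prime assms unfolding ExpPrime_def by blast+

lemma e_zero [simp]: "e x \<zero> = \<one>"
  and e_one [simp]: "e x \<one> = x"
  and e_nonzero: "y \<in> A \<Longrightarrow> x \<noteq> \<zero> \<Longrightarrow> e x y \<noteq> \<zero>"
  and e_add: "y \<in> A \<Longrightarrow> z \<in> A \<Longrightarrow> e x (y \<oplus> z) = e x y \<otimes> e x z"
  using e_axioms zero_in_A by blast+

lemma nm_in_A: "nm M n \<in> A"
  by (induct n) (simp_all add: zero_in_A one_in_A add_in_A)

lemma e_nm: "e x (nm M n) = mpow M x n"
  by (induct n) (simp_all add: e_add nm_in_A one_in_A)

lemma madd_in_A: "y \<in> A \<Longrightarrow> madd M n y \<in> A"
  by (induct n) (simp_all add: zero_in_A add_in_A)

lemma e_madd: "y \<in> A \<Longrightarrow> e x (madd M n y) = mpow M (e x y) n"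
  by (induct n) (simp_all add: e_add madd_in_A)

lemma exponent_standard_if_bounded:
  assumes "\<one> \<prec> x" and "a \<in> A" and "e x a \<preceq> nm M B"
  shows "\<exists>j. a = nm M j"
proof (cases "a \<prec> nm M B")
  case True
  then show ?thesis
    using less_nm_imp_nm by blast
next
  case False
  then obtain d where d: "d \<in> A" "a = nm M B \<oplus> d"
    using A_le_iff[OF nm_in_A \<open>a \<in> A\<close>] arith.not_less by metis
  have "nm M B \<prec> nm M (2 ^ B)"
    by (simp add: nm_strict_mono)
  also have "\<dots> \<preceq> mpow M x B"
    using nm_two_power_le[OF \<open>\<one> \<prec> x\<close>] .
  also have "\<dots> \<preceq> e x d \<otimes> mpow M x B"
    using le_mul_left e_nonzero d(1) \<open>\<one> \<prec> x\<close> not_less_zero by metis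
  also have "\<dots> = e x a"
    using d by (simp add: e_add nm_in_A e_nm arith.mult.commute)
  finally show ?thesis
    using assms(3) arith.not_le by blast
qed

lemma exponent_div_five:
  assumes "a \<in> A"
  obtains y j where "y \<in> A" "j < 5" "a = madd M 5 y \<oplus> nm M j"
proof -
  obtain y where y: "y \<in> A" "madd M 5 y \<preceq> a" "a \<prec> madd M 5 (y \<oplus> \<one>)"
    using A_div[of 5 a] assms by auto
  then obtain r where r: "r \<in> A" "a = madd M 5 y \<oplus> r"
    using A_le_iff[OF madd_in_A[OF y(1)] assms] by metis
  then have "r \<prec> nm M 5"
    using y(3) by (simp add: madd_succ)
  then show ?thesis
    using that y(1) r(2) less_nm_imp_nm by blast
qed

lemma exp_radical_cover:
  assumes x: "\<one> \<prec> x" and a: "a \<in> A" "\<one> \<prec> a"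
  obtains \<alpha> where "radical_cover \<alpha> (e x a)" and "mpow M \<alpha> 2 \<preceq> e x a"
    and "mpow M \<alpha> 5 \<preceq> e x a \<or> (\<exists>n. a = nm M n)"
proof -
  have "x \<noteq> \<zero>"
    using x by auto
  obtain y j where y: "y \<in> A" and a_eq: "a = madd M 5 y \<oplus> nm M j"
    using exponent_div_five a(1) by blast
  then have e_eq: "e x a = mpow M (e x y) 5 \<otimes> mpow M x j"
    by (simp add: e_add madd_in_A nm_in_A e_madd e_nm)
  show ?thesis
  proof (cases "y = \<zero>")
    case True
    then have "a = nm M j"
      using a_eq by simp
    moreover from this have "j \<noteq> 0"
      using a(2) not_less_zero nm.simps(1) by metis
    moreover from \<open>a = nm M j\<close> have "j \<noteq> 1"
      using a(2) by (auto simp: One_nat_def)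
    ultimately have "2 \<le> j" and "e x a = mpow M x j"
      by (simp_all add: e_nm)
    then have "radical_cover x (e x a)" and "mpow M x 2 \<preceq> e x a"
      using radical_cover_mpow mpow_exp_mono[OF \<open>x \<noteq> \<zero>\<close>] by simp_all
    then show ?thesis
      using that \<open>a = nm M j\<close> by blast
  next
    case False
    then obtain y' where "y' \<in> A" "y = y' \<oplus> \<one>"
      using A_pred y by blast
    then have "x \<triangleleft> e x y"
      by (simp add: e_add one_in_A)
    moreover have "e x y \<noteq> \<zero>"
      using e_nonzero y \<open>x \<noteq> \<zero>\<close> by blast
    moreover have "mpow M (e x y) 5 \<preceq> e x a"
      unfolding e_eq
      by (subst arith.mult.commute) (rule le_mul_left[OF mpow_nonzero[OF \<open>x \<noteq> \<zero>\<close>]])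
    ultimately show ?thesis
      using that[of "e x y"] radical_cover_mpow_mult mpow_exp_mono[of "e x y" 2 5] arith.order_trans
      unfolding e_eq by auto
  qed
qed

lemma catalan_exponents_standard:
  assumes abc: "abc_third M K" and x: "\<one> \<prec> x" and y: "\<one> \<prec> y"
    and a: "a \<in> A" "\<one> \<prec> a" and b: "b \<in> A" "\<one> \<prec> b" and uv: "e x a = e y b \<oplus> \<one>"
  shows "(\<exists>i. a = nm M i) \<and> (\<exists>j. b = nm M j)"
proof (rule ccontr)
  assume nonstandard: "\<not> ((\<exists>i. a = nm M i) \<and> (\<exists>j. b = nm M j))"
  obtain \<alpha> where \<alpha>: "radical_cover \<alpha> (e x a)" "mpow M \<alpha> 2 \<preceq> e x a"
    "mpow M \<alpha> 5 \<preceq> e x a \<or> (\<exists>n. a = nm M n)"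
    using exp_radical_cover x a by blast
  obtain \<beta> where \<beta>: "radical_cover \<beta> (e y b)" "mpow M \<beta> 2 \<preceq> e y b"
    "mpow M \<beta> 5 \<preceq> e y b \<or> (\<exists>n. b = nm M n)"
    using exp_radical_cover y b by blast
  have "e y b \<noteq> \<zero>"
    using e_nonzero b(1) y not_less_zero by metis
  then have bound: "e x a \<preceq> nm M (K ^ 15)"
    using abc_third_catalan_bound[OF abc uv _ \<alpha>(1,2) \<beta>(1,2)] \<alpha>(3) \<beta>(3) nonstandard by blast
  moreover have "e y b \<preceq> e x a"
    unfolding uv le_iff_add by blast
  ultimately have "\<exists>i. a = nm M i" "\<exists>j. b = nm M j"
    using exponent_standard_if_bounded x y a(1) b(1) arith.order_trans by blast+
  then show False
    using nonstandard by blast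
qed

lemma catalan_of_abc_third:
  assumes abc: "abc_third M K" and f: "exp_sigma1 M f" "catalan M UNIV UNIV f"
  shows "catalan M UNIV A e"
  unfolding catalan_def
proof (intro ballI impI)
  fix x y a b
  assume "a \<in> A" "b \<in> A"
    and solution: "\<one> \<prec> x \<and> \<one> \<prec> y \<and> \<one> \<prec> a \<and> \<one> \<prec> b \<and> e x a = e y b \<oplus> \<one>"
  then obtain i j where "a = nm M i" "b = nm M j"
    using catalan_exponents_standard[OF abc] by blast
  then have "f x a = f y b \<oplus> \<one>"
    using solution by (simp add: exp_sigma1_nm[OF f(1)] e_nm)
  then show "x = nm M 3 \<and> a = nm M 2 \<and> y = nm M 2 \<and> b = nm M 3"
    using f(2) solution unfolding catalan_def by blast
qed

end

theorem theorem5p2: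
  fixes M :: "'a Lstr" and K :: nat and A :: "'a set" and e :: "'a \<Rightarrow> 'a \<Rightarrow> 'a"
  assumes "ISigma1 M"
    and "abc_third M K"
    and "\<exists>f. exp_sigma1 M f \<and> catalan M UNIV UNIV f"
    and "ExpPrime M A e"
  shows "catalan M UNIV A e"
proof -
  interpret exp_model M A e
    using assms(1,4) by unfold_locales
  show ?thesis
    using assms(2,3) catalan_of_abc_third by blast
qed

end
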